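(* Let $(C,\mathbf A)$ be an $\mathbf a$-output-stable pair ($C\in\mathcal L(\mathcal X,\mathcal Y)$, $\mathbf A\in\mathcal L(\mathcal X)^d$) and let $\mathcal G^{\mathbf a}_{C,\mathbf A}$ be its abelianized observability gramian. Then $$\mathcal G^{\mathbf a}_{C,\mathbf A}-A_1^*\mathcal G^{\mathbf a}_{C,\mathbf A}A_1-\cdots-A_d^*\mathcal G^{\mathbf a}_{C,\mathbf A}A_d\le C^*C.$$ Moreover, the following are equivalent: (1) equality holds in this inequality; (2) $\mathbf A$ is $C$-abelian, i.e. $C\mathbf A^v=C\mathbf A^u$ whenever $u,v\in\mathcal F_d$ with $\mathbf a(v)=\mathbf a(u)$; (3) $\mathcal G^{\mathbf a}_{C,\mathbf A}=\mathcal G_{C,\mathbf A}$.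
   Context: $\mathcal F_d$: free semigroup of words on $\{1,\dots,d\}$; for $v=i_N\cdots i_1$, $\mathbf A^v=A_{i_N}\cdots A_{i_1}$. The abelianization map $\mathbf a\colon\mathcal F_d\to\mathbb Z^d_+$ sends $i_N\cdots i_1$ to $(n_1,\dots,n_d)$ with $n_k=\#\{\ell:i_\ell=k\}$. For $\mathbf n\in\mathbb Z^d_+$: $|\mathbf n|=n_1+\cdots+n_d$, $\mathbf n!=n_1!\cdots n_d!$, $\boldsymbol\lambda^{\mathbf n}=\lambda_1^{n_1}\cdots\lambda_d^{n_d}$. The Arveson space $\mathcal H_{\mathcal Y}(k_d)$ consists of power series $f(\boldsymbol\lambda)=\sum_{\mathbf n}f_{\mathbf n}\boldsymbol\lambda^{\mathbf n}$ ($f_{\mathbf n}\in\mathcal Y$) with $\|f\|^2=\sum_{\mathbf n}\frac{\mathbf n!}{|\mathbf n|!}\|f_{\mathbf n}\|^2<\infty$ (reproducing kernel $1/(1-\langle\boldsymbol\lambda,\boldsymbol\zeta\rangle)$ on the unit ball of $\mathbb C^d$). $(C,\mathbf A)$ is $\mathbf a$-output-stable if $\widehat{\mathcal O}^{\mathbf a}_{C,\mathbf A}\colon x\mapsto\sum_{\mathbf n}\big(\sum_{v\in\mathbf a^{-1}(\mathbf n)}C\mathbf A^vx\big)\boldsymbol\lambda^{\mathbf n}$ (formally $C(I-\lambda_1A_1-\cdots-\lambda_dA_d)^{-1}x$) maps $\mathcal X$ boundedly into $\mathcal H_{\mathcal Y}(k_d)$; then $\mathcal G^{\mathbf a}_{C,\mathbf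 A}=(\widehat{\mathcal O}^{\mathbf a}_{C,\mathbf A})^*\widehat{\mathcal O}^{\mathbf a}_{C,\mathbf A}=\sum_{\mathbf n}\frac{\mathbf n!}{|\mathbf n|!}\sum_{u,v\in\mathbf a^{-1}(\mathbf n)}(\mathbf A^v)^*C^*C\mathbf A^u$. The (noncommutative) observability gramian is $\mathcal G_{C,\mathbf A}=\sum_{v\in\mathcal F_d}(\mathbf A^v)^*C^*C\mathbf A^v$ (strong operator sum). *)

theory Defs
  imports "HOL-Analysis.Analysis" "HOL-Library.Complex_Order"
begin

class complex_inner = real_normed_vector +
  fixes scaleC :: "complex \<Rightarrow> 'a \<Rightarrow> 'a"
    and cinner :: "'a \<Rightarrow> 'a \<Rightarrow> complex"
  assumes scaleC_add_right: "scaleC a (x + y) = scaleC a x + scaleC a y"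
    and scaleC_add_left: "scaleC (a + b) x = scaleC a x + scaleC b x"
    and scaleC_scaleC: "scaleC a (scaleC b x) = scaleC (a * b) x"
    and scaleC_one: "scaleC 1 x = x"
    and scaleC_of_real: "scaleC (complex_of_real r) x = scaleR r x"
    and cinner_add_left: "cinner (x + y) z = cinner x z + cinner y z"
    and cinner_scaleC_left: "cinner (scaleC a x) y = a * cinner x y"
    and cinner_commute: "cinner y x = cnj (cinner x y)"
    and cinner_self_ge_zero: "0 \<le> Re (cinner x x)"
    and cinner_self_eq_zero: "cinner x x = 0 \<longleftrightarrow> x = 0"
    and norm_eq_sqrt_cinner: "norm x = sqrt (Re (cinner x x))"

class chilbert_space = complex_inner + complete_space

instantiation complex :: complex_inner
begin
definition scaleC_complex :: "complex \<Rightarrow> complex \<Rightarrow> complex" where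
  "scaleC_complex a x = a * x"
definition cinner_complex :: "complex \<Rightarrow> complex \<Rightarrow> complex" where
  "cinner_complex x y = x * cnj y"
instance
proof
  fix x :: complex
  show "cinner x x = 0 \<longleftrightarrow> x = 0"
    by (simp add: cinner_complex_def)
qed (auto simp: scaleC_complex_def cinner_complex_def algebra_simps scaleR_conv_of_real
      complex_mult_cnj cmod_def power2_eq_square)
end

instance complex :: chilbert_space ..

definition bounded_clinear :: "('a::complex_inner \<Rightarrow> 'b::complex_inner) \<Rightarrow> bool" where
  "bounded_clinear T \<longleftrightarrow> bounded_linear T \<and> (\<forall>c x. T (scaleC c x) = scaleC c (T x))"

definition adj :: "('a::complex_inner \<Rightarrow> 'b::complex_inner) \<Rightarrow> 'b \<Rightarrow> 'a" where
  "adj T = (SOME S. \<forall>x y. cinner (T x) y = cinner x (S y))"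

definition op_le :: "('a::complex_inner \<Rightarrow> 'a) \<Rightarrow> ('a \<Rightarrow> 'a) \<Rightarrow> bool" where
  "op_le S T \<longleftrightarrow> (\<forall>x. 0 \<le> cinner (T x - S x) x)"

text \<open>The index set \<open>{1,\<dots>,d}\<close> is a finite type \<open>'d\<close>; words in the free semigroup
  \<open>\<F>\<^sub>d\<close> are lists; the word \<open>i\<^sub>N \<cdots> i\<^sub>1\<close> is the list \<open>[i\<^sub>N, \<dots>, i\<^sub>1]\<close>, and
  \<open>A\<^sup>v = A\<^sub>i\<^sub>N \<cdots> A\<^sub>i\<^sub>1\<close>.  Multi-indices in \<open>\<int>\<^sub>+\<^sup>d\<close> are functions \<open>'d \<Rightarrow> nat\<close>.\<close>

fun wordop :: "('d \<Rightarrow> 'a \<Rightarrow> 'a) \<Rightarrow> 'd list \<Rightarrow> 'a \<Rightarrow> 'a" where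
  "wordop A [] = id"
| "wordop A (i # w) = A i \<circ> wordop A w"

definition abel :: "'d list \<Rightarrow> 'd \<Rightarrow> nat" where
  "abel v = (\<lambda>k. count_list v k)"

definition words_of :: "('d \<Rightarrow> nat) \<Rightarrow> 'd list set" where
  "words_of n = {v. abel v = n}"

definition arv_weight :: "('d::finite \<Rightarrow> nat) \<Rightarrow> real" where
  "arv_weight n = (\<Prod>i\<in>UNIV. fact (n i)) / fact (\<Sum>i\<in>UNIV. n i)"

text \<open>Coefficient of \<open>\<lambda>\<^sup>n\<close> in \<open>\<hat>\<O>\<^sup>a\<^sub>C\<^sub>,\<^sub>A x\<close>.\<close>

definition obs_coeff :: "('x \<Rightarrow> 'y::comm_monoid_add) \<Rightarrow> ('d \<Rightarrow> 'x \<Rightarrow> 'x) \<Rightarrow> 'x \<Rightarrow> ('d \<Rightarrow> nat) \<Rightarrow> 'y" where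
  "obs_coeff C A x n = (\<Sum>v\<in>words_of n. C (wordop A v x))"

text \<open>Arveson-space norm squared and inner product of the power series with
  coefficients \<open>f n\<close>, \<open>g n\<close>.\<close>

definition arv_norm2 :: "((('d::finite) \<Rightarrow> nat) \<Rightarrow> 'y::complex_inner) \<Rightarrow> real" where
  "arv_norm2 f = (\<Sum>\<^sub>\<infinity>n. arv_weight n * (norm (f n))\<^sup>2)"

definition arv_inner :: "((('d::finite) \<Rightarrow> nat) \<Rightarrow> 'y::complex_inner) \<Rightarrow> (('d \<Rightarrow> nat) \<Rightarrow> 'y) \<Rightarrow> complex" where
  "arv_inner f g = (\<Sum>\<^sub>\<infinity>n. complex_of_real (arv_weight n) * cinner (f n) (g n))"

text \<open>\<open>\<a>\<close>-output-stability: \<open>x \<mapsto> \<hat>\<O>\<^sup>a\<^sub>C\<^sub>,\<^sub>A x\<close> maps \<open>\<X>\<close> boundedly into the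
  Arveson space \<open>\<H>\<^sub>\<Y>(k\<^sub>d)\<close>.\<close>

definition a_output_stable :: "('x::complex_inner \<Rightarrow> 'y::complex_inner) \<Rightarrow> ('d::finite \<Rightarrow> 'x \<Rightarrow> 'x) \<Rightarrow> bool" where
  "a_output_stable C A \<longleftrightarrow>
     (\<forall>x. (\<lambda>n. arv_weight n * (norm (obs_coeff C A x n))\<^sup>2) summable_on UNIV) \<and>
     (\<exists>M. \<forall>x. arv_norm2 (obs_coeff C A x) \<le> M * (norm x)\<^sup>2)"

text \<open>Abelianized observability gramian \<open>\<G>\<^sup>a = (\<hat>\<O>\<^sup>a)\<^sup>* \<hat>\<O>\<^sup>a\<close>, i.e. the operator
  with \<open>\<langle>\<G>\<^sup>a x, y\<rangle> = \<langle>\<hat>\<O>\<^sup>a x, \<hat>\<O>\<^sup>a y\<rangle>\<^sub>\<H>\<^sub>(\<^sub>k\<^sub>d\<^sub>)\<close>.\<close>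

definition gram_a :: "('x::complex_inner \<Rightarrow> 'y::complex_inner) \<Rightarrow> ('d::finite \<Rightarrow> 'x \<Rightarrow> 'x) \<Rightarrow> 'x \<Rightarrow> 'x" where
  "gram_a C A = (SOME G. \<forall>x y. cinner (G x) y = arv_inner (obs_coeff C A x) (obs_coeff C A y))"

text \<open>\<open>T\<close> is the strong-operator sum of \<open>\<Sum>\<^sub>v\<^sub>\<in>\<^sub>\<F>\<^sub>d (A\<^sup>v)\<^sup>* C\<^sup>* C A\<^sup>v\<close>, i.e. \<open>T\<close> is the
  (noncommutative) observability gramian \<open>\<G>\<^sub>C\<^sub>,\<^sub>A\<close> (and in particular the sum converges).\<close>

definition is_nc_gram :: "('x::complex_inner \<Rightarrow> 'y::complex_inner) \<Rightarrow> ('d \<Rightarrow> 'x \<Rightarrow> 'x) \<Rightarrow> ('x \<Rightarrow> 'x) \<Rightarrow> bool" where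
  "is_nc_gram C A T \<longleftrightarrow>
     (\<forall>x. ((\<lambda>v. adj (wordop A v) (adj C (C (wordop A v x)))) has_sum T x) UNIV)"

definition C_abelian :: "('x \<Rightarrow> 'y) \<Rightarrow> ('d \<Rightarrow> 'x \<Rightarrow> 'x) \<Rightarrow> bool" where
  "C_abelian C A \<longleftrightarrow> (\<forall>u v. abel v = abel u \<longrightarrow> C \<circ> wordop A v = C \<circ> wordop A u)"

end

theory Submission
  imports Defs
begin

(* Write O x for the power series whose coefficient (O x)_m is the sum of C A^v x over the words v
   with abelianization m. The gramian is characterized by <G x, y> = <O x, O y> in the Arveson
   space, so the quadratic form of C*C - G + sum_i A_i* G A_i is
   |C x|^2 - |O x|^2 + sum_i |O (A_i x)|^2.
   Reindexing |O (A_i x)|^2 by m = n + e_i splits this into one term per multi-index m. For m <> 0,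
   (O x)_m is the sum of c_i = (O (A_i x))_(m - e_i) over the i with m_i > 0, and the Arveson
   weights satisfy w(m - e_i) = w(m) / p_i, where p_i = m_i / |m| is a probability vector; so the
   m-th term is the weighted variance w(m) (sum_i |c_i|^2 / p_i - |sum_i c_i|^2) >= 0.
   All these terms vanish iff c_i = p_i (O x)_m throughout, which by induction on words says that
   every output C A^v x equals the average w(m) (O x)_m of the outputs of the words with the same
   abelianization, i.e. that A is C-abelian. The same variance argument, now over the words of one
   abelianization, gives sum_v |C A^v x|^2 >= |O x|^2 with equality for all x iff A is C-abelian;
   and this equality is equivalent to strong convergence of sum_v (A^v)* C* C A^v to G, because
   the remainders R = G - sum_(v in F) (A^v)* C* C A^v are positive and |R x|^2 <= |R| <R x, x>. *)

section \<open>Complex inner product spaces\<close>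

lemma cinner_zero_left [simp]: "cinner 0 (y::'a::complex_inner) = 0"
  using cinner_add_left[of "0::'a" 0 y] by simp

lemma cinner_zero_right [simp]: "cinner x (0::'a::complex_inner) = 0"
  by (metis cinner_commute cinner_zero_left complex_cnj_zero)

lemma cinner_diff_left: "cinner (x - z) (y::'a::complex_inner) = cinner x y - cinner z y"
  by (metis add_diff_cancel cinner_add_left diff_add_cancel)

lemma cinner_add_right: "cinner x (y + z::'a::complex_inner) = cinner x y + cinner x z"
  by (metis cinner_add_left cinner_commute complex_cnj_add)

lemma cinner_diff_right: "cinner x (y - z::'a::complex_inner) = cinner x y - cinner x z"
  by (metis cinner_commute cinner_diff_left complex_cnj_diff)

lemma cinner_scaleC_right: "cinner x (scaleC a y::'a::complex_inner) = cnj a * cinner x y"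
  by (metis cinner_commute cinner_scaleC_left complex_cnj_mult)

lemma cinner_scaleR_left: "cinner (scaleR r x) (y::'a::complex_inner) = of_real r * cinner x y"
  by (metis cinner_scaleC_left scaleC_of_real)

lemma cinner_scaleR_right: "cinner x (scaleR r y::'a::complex_inner) = of_real r * cinner x y"
  by (metis cinner_scaleC_right scaleC_of_real complex_cnj_complex_of_real)

lemma cinner_sum_left: "cinner (\<Sum>i\<in>I. f i) (y::'a::complex_inner) = (\<Sum>i\<in>I. cinner (f i) y)"
  by (induction I rule: infinite_finite_induct) (auto simp: cinner_add_left)

lemma scaleC_zero_right [simp]: "scaleC a (0::'a::complex_inner) = 0"
  using scaleC_add_right[of a "0::'a" 0] by simp

lemma scaleC_diff_right: "scaleC a (x - y::'a::complex_inner) = scaleC a x - scaleC a y"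
  by (metis add_diff_cancel diff_add_cancel scaleC_add_right)

lemma scaleC_sum_right: "scaleC a (\<Sum>i\<in>I. f i) = (\<Sum>i\<in>I. scaleC a (f i::'a::complex_inner))"
  by (induction I rule: infinite_finite_induct) (auto simp: scaleC_add_right)

lemma cinner_self: "cinner x (x::'a::complex_inner) = of_real ((norm x)\<^sup>2)"
proof -
  have "Im (cinner x x) = 0"
    using cinner_commute[of x x] by (metis Im_complex_of_real Reals_cnj_iff complex_is_Real_iff)
  moreover have "(norm x)\<^sup>2 = Re (cinner x x)"
    using norm_eq_sqrt_cinner[of x] cinner_self_ge_zero[of x] by simp
  ultimately show ?thesis by (simp add: complex_eq_iff)
qed

lemma power2_norm_diff:
  "(norm (x - y::'a::complex_inner))\<^sup>2 = (norm x)\<^sup>2 - 2 * Re (cinner x y) + (norm y)\<^sup>2"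
proof -
  have "(norm (x - y))\<^sup>2 = Re (cinner (x - y) (x - y))" by (simp add: cinner_self)
  also have "\<dots> = Re (cinner x x) - Re (cinner x y) - Re (cnj (cinner x y)) + Re (cinner y y)"
    by (simp add: cinner_diff_left cinner_diff_right cinner_commute[of y x])
  finally show ?thesis by (simp add: cinner_self)
qed

lemma parallelogram_law:
  "(norm (x + y::'a::complex_inner))\<^sup>2 + (norm (x - y))\<^sup>2 = 2 * (norm x)\<^sup>2 + 2 * (norm y)\<^sup>2"
proof -
  have "cinner x (- y) = - cinner x y"
    using cinner_diff_right[of x 0 y] by simp
  then show ?thesis
    using power2_norm_diff[of x y] power2_norm_diff[of x "- y"] by simp
qed

lemma cinner_cauchy_schwarz: "cmod (cinner x (y::'a::complex_inner)) \<le> norm x * norm y"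
proof (cases "y = 0")
  case False
  define c where "c = cinner x y / cinner y y"
  have ny: "cinner y y = of_real ((norm y)\<^sup>2)" by (rule cinner_self)
  have ny0: "norm y > 0" using False by simp
  have "0 \<le> Re (cinner (x - scaleC c y) (x - scaleC c y))" by (rule cinner_self_ge_zero)
  also have "cinner (x - scaleC c y) (x - scaleC c y)
      = cinner x x - cnj c * cinner x y - c * cinner y x + c * cnj c * cinner y y"
    by (simp add: cinner_diff_left cinner_diff_right cinner_scaleC_left cinner_scaleC_right algebra_simps)
  also have "c * cnj c * cinner y y = cnj c * cinner x y"
    using ny0 unfolding c_def ny by (simp add: field_simps)
  finally have "0 \<le> Re (cinner x x - c * cinner y x)" by simp
  also have "c * cinner y x = of_real ((cmod (cinner x y))\<^sup>2 / (norm y)\<^sup>2)"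
    unfolding c_def ny using cinner_commute[of y x]
    by (simp add: complex_norm_square[symmetric] of_real_power)
  finally have "(cmod (cinner x y))\<^sup>2 / (norm y)\<^sup>2 \<le> (norm x)\<^sup>2" by (simp add: cinner_self)
  then have "(cmod (cinner x y))\<^sup>2 \<le> (norm x * norm y)\<^sup>2"
    using ny0 by (simp add: field_simps power_mult_distrib)
  then show ?thesis by (rule power2_le_imp_le) simp
qed simp

lemma bounded_linear_cinner_left: "bounded_linear (\<lambda>x. cinner x (y::'a::complex_inner))"
proof
  show "cinner (x + z) y = cinner x y + cinner z y" for x z by (rule cinner_add_left)
  show "cinner (scaleR r x) y = scaleR r (cinner x y)" for r x
    by (simp add: cinner_scaleR_left scaleR_conv_of_real)
  show "\<exists>K. \<forall>x. norm (cinner x y) \<le> norm x * K"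
    using cinner_cauchy_schwarz by blast
qed

lemma cinner_ext_left: "(\<And>y. cinner x y = cinner z (y::'a::complex_inner)) \<Longrightarrow> x = z"
  by (metis cinner_diff_left cinner_self_eq_zero eq_iff_diff_eq_0)

lemma cinner_ext_right: "(\<And>y. cinner y x = cinner y (z::'a::complex_inner)) \<Longrightarrow> x = z"
  by (metis cinner_diff_right cinner_self_eq_zero eq_iff_diff_eq_0)

text \<open>Polarization: testing the form at \<open>x + y\<close> and at \<open>x + \<i> y\<close> recovers \<open>\<langle>E x, y\<rangle>\<close>.\<close>

lemma clinear_eq_0_if_quadratic_form_eq_0:
  fixes E :: "'a::complex_inner \<Rightarrow> 'a"
  assumes add: "\<And>x y. E (x + y) = E x + E y" and scale: "\<And>c x. E (scaleC c x) = scaleC c (E x)"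
    and form: "\<And>z. cinner (E z) z = 0"
  shows "E x = 0"
proof -
  have sum: "cinner (E x) y + cinner (E y) x = 0" for y
  proof -
    have "cinner (E (x + y)) (x + y) = cinner (E x) x + cinner (E x) y + cinner (E y) x + cinner (E y) y"
      by (simp add: add cinner_add_left cinner_add_right)
    then show ?thesis using form[of "x + y"] form[of x] form[of y] by simp
  qed
  have "cinner (E x) (E x) = 0"
    using sum[of "E x"] sum[of "scaleC \<i> (E x)"]
    by (simp add: scale cinner_scaleC_left cinner_scaleC_right algebra_simps)
  then show ?thesis by (simp add: cinner_self_eq_zero)
qed

lemma weighted_variance_identity:
  fixes c :: "'i \<Rightarrow> 'y::complex_inner"
  assumes "finite I" and p_pos: "\<And>i. i \<in> I \<Longrightarrow> p i > 0" and p_sum: "(\<Sum>i\<in>I. p i) = 1"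
  shows "(\<Sum>i\<in>I. (norm (c i))\<^sup>2 / p i) - (norm (\<Sum>i\<in>I. c i))\<^sup>2
       = (\<Sum>i\<in>I. (norm (c i - scaleR (p i) (\<Sum>j\<in>I. c j)))\<^sup>2 / p i)"
proof -
  define s where "s = (\<Sum>j\<in>I. c j)"
  have "(norm (c i - scaleR (p i) s))\<^sup>2 / p i
      = (norm (c i))\<^sup>2 / p i - 2 * Re (cinner (c i) s) + p i * (norm s)\<^sup>2" if "i \<in> I" for i
  proof -
    have "(norm (c i - scaleR (p i) s))\<^sup>2
        = (norm (c i))\<^sup>2 - 2 * (p i * Re (cinner (c i) s)) + (p i)\<^sup>2 * (norm s)\<^sup>2"
      by (simp add: power2_norm_diff cinner_scaleR_right power_mult_distrib)
    then show ?thesis using p_pos[OF that] by (simp add: diff_divide_distrib add_divide_distrib power2_eq_square)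
  qed
  then have "(\<Sum>i\<in>I. (norm (c i - scaleR (p i) s))\<^sup>2 / p i)
      = (\<Sum>i\<in>I. (norm (c i))\<^sup>2 / p i) - 2 * Re (cinner s s) + (\<Sum>i\<in>I. p i) * (norm s)\<^sup>2"
    unfolding s_def
    by (simp add: sum.distrib sum_subtractf sum_distrib_left sum_distrib_right cinner_sum_left Re_sum)
  then show ?thesis unfolding s_def[symmetric] p_sum by (simp add: cinner_self)
qed

text \<open>Test the quadratic form at \<open>x - R x / M\<close>.\<close>

lemma norm_sq_le_if_positive_bounded:
  fixes R :: "'a::complex_inner \<Rightarrow> 'a" and q :: "'a \<Rightarrow> real"
  assumes add: "\<And>y z. R (y + z) = R y + R z" and scale: "\<And>c z. R (scaleC c z) = scaleC c (R z)"
    and hermitian: "\<And>y z. cinner (R y) z = cnj (cinner (R z) y)"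
    and form: "\<And>z. cinner (R z) z = of_real (q z)"
    and q_nonneg: "\<And>z. 0 \<le> q z" and q_le: "\<And>z. q z \<le> M * (norm z)\<^sup>2" and "0 < M"
  shows "(norm (R x))\<^sup>2 \<le> M * q x"
proof -
  define y where "y = R x"
  define t where "t = 1 / M"
  have Rx_y: "cinner (R x) y = of_real ((norm y)\<^sup>2)" unfolding y_def by (rule cinner_self)
  then have Ry_x: "cinner (R y) x = of_real ((norm y)\<^sup>2)" using hermitian[of y x] by simp
  have "R (x - scaleC (of_real t) y) = R x - scaleC (of_real t) (R y)"
    using add[of "x - scaleC (of_real t) y" "scaleC (of_real t) y"] scale[of "of_real t" y]
    by (simp add: algebra_simps)
  then have "of_real (q (x - scaleC (of_real t) y))
      = cinner (R x - scaleC (of_real t) (R y)) (x - scaleC (of_real t) y)"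
    by (simp add: form[symmetric])
  also have "\<dots> = cinner (R x) x - of_real t * cinner (R x) y - of_real t * cinner (R y) x
      + of_real t * of_real t * cinner (R y) y"
    by (simp add: cinner_diff_left cinner_diff_right cinner_scaleC_left cinner_scaleC_right
        algebra_simps)
  also have "\<dots> = of_real (q x - 2 * t * (norm y)\<^sup>2 + t\<^sup>2 * q y)"
    unfolding Rx_y Ry_x form by (simp add: power2_eq_square)
  finally have "q (x - scaleC (of_real t) y) = q x - 2 * t * (norm y)\<^sup>2 + t\<^sup>2 * q y"
    using of_real_eq_iff by blast
  moreover have "t\<^sup>2 * q y \<le> t\<^sup>2 * (M * (norm y)\<^sup>2)" by (intro mult_left_mono q_le) simp
  moreover have "t\<^sup>2 * (M * (norm y)\<^sup>2) = t * (norm y)\<^sup>2"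
    using \<open>0 < M\<close> by (simp add: t_def power2_eq_square)
  ultimately have "t * (norm y)\<^sup>2 \<le> q x" using q_nonneg[of "x - scaleC (of_real t) y"] by linarith
  then show ?thesis using \<open>0 < M\<close> unfolding y_def t_def by (simp add: field_simps)
qed

section \<open>Riesz representation and adjoints\<close>

text \<open>\<open>adj T\<close> and \<open>gram_a C A\<close> are defined by Hilbert choice; the Riesz representation theorem
  provides the witnesses.\<close>

lemma minimizing_sequence_Cauchy:
  fixes X :: "nat \<Rightarrow> 'a::complex_inner"
  assumes midpoint: "\<And>x y. x \<in> S \<Longrightarrow> y \<in> S \<Longrightarrow> scaleR (1/2) (x + y) \<in> S"
    and d_le: "\<And>y. y \<in> S \<Longrightarrow> d \<le> (norm y)\<^sup>2"
    and XS: "\<And>n. X n \<in> S" and X: "\<And>n. (norm (X n))\<^sup>2 < d + inverse (Suc n)"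
  shows "Cauchy X"
proof (rule metric_CauchyI)
  have X_close: "(norm (X n - X m))\<^sup>2 \<le> 2 * inverse (Suc n) + 2 * inverse (Suc m)" for n m
  proof -
    have "d \<le> (norm (scaleR (1/2) (X n + X m)))\<^sup>2" by (intro d_le midpoint XS)
    then have "4 * d \<le> (norm (X n + X m))\<^sup>2" by (simp add: power_mult_distrib power2_eq_square)
    then show ?thesis using X[of n] X[of m] parallelogram_law[of "X n" "X m"] by linarith
  qed
  fix e :: real assume "0 < e"
  obtain N :: nat where N: "inverse (Suc N) < e\<^sup>2 / 4"
    using \<open>0 < e\<close> reals_Archimedean[of "e\<^sup>2/4"] by auto
  have "dist (X m) (X n) < e" if "N \<le> m" "N \<le> n" for m n
  proof -
    have "inverse (Suc m) \<le> inverse (Suc N)" "inverse (Suc n) \<le> inverse (Suc N)"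
      using that by (auto simp: field_simps)
    with X_close[of m n] N have "(norm (X m - X n))\<^sup>2 < e\<^sup>2" by linarith
    then show ?thesis using \<open>0 < e\<close> by (simp add: dist_norm power_less_imp_less_base)
  qed
  then show "\<exists>M. \<forall>m\<ge>M. \<forall>n\<ge>M. dist (X m) (X n) < e" by blast
qed

lemma norm_minimizer_exists:
  fixes S :: "'a::chilbert_space set"
  assumes "closed S" "S \<noteq> {}"
    and midpoint: "\<And>x y. x \<in> S \<Longrightarrow> y \<in> S \<Longrightarrow> scaleR (1/2) (x + y) \<in> S"
  obtains x0 where "x0 \<in> S" "\<And>y. y \<in> S \<Longrightarrow> norm x0 \<le> norm y"
proof -
  define d where "d = Inf ((\<lambda>x. (norm x)\<^sup>2) ` S)"
  have d_le: "d \<le> (norm y)\<^sup>2" if "y \<in> S" for y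
    unfolding d_def using that by (intro cInf_lower bdd_belowI[of _ 0]) auto
  have "\<exists>x\<in>S. (norm x)\<^sup>2 < d + inverse (Suc n)" for n
  proof -
    have "Inf ((\<lambda>x. (norm x)\<^sup>2) ` S) < d + inverse (Suc n)" unfolding d_def by simp
    then show ?thesis using cInf_lessD[of "(\<lambda>x. (norm x)\<^sup>2) ` S"] \<open>S \<noteq> {}\<close> by blast
  qed
  then obtain X where XS: "\<And>n. X n \<in> S" and X: "\<And>n. (norm (X n))\<^sup>2 < d + inverse (Suc n)"
    by metis
  have "Cauchy X" using midpoint d_le XS X by (rule minimizing_sequence_Cauchy)
  then obtain x0 where lim: "X \<longlonglongrightarrow> x0" using Cauchy_convergent convergent_def by blast
  show ?thesis
  proof
    show "x0 \<in> S" using closed_sequentially[OF \<open>closed S\<close> _ lim] XS by blast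
    show "norm x0 \<le> norm y" if "y \<in> S" for y
    proof -
      have "(\<lambda>n. (norm (X n))\<^sup>2) \<longlonglongrightarrow> (norm x0)\<^sup>2" by (intro tendsto_intros lim)
      moreover have "(\<lambda>n. (norm y)\<^sup>2 + inverse (Suc n)) \<longlonglongrightarrow> (norm y)\<^sup>2 + 0"
        by (intro tendsto_intros LIMSEQ_inverse_real_of_nat)
      moreover have "(norm (X n))\<^sup>2 \<le> (norm y)\<^sup>2 + inverse (Suc n)" for n
        using X[of n] d_le[OF that] by linarith
      ultimately have "(norm x0)\<^sup>2 \<le> (norm y)\<^sup>2" by (simp add: LIMSEQ_le)
      then show ?thesis by (rule power2_le_imp_le) simp
    qed
  qed
qed

lemma cinner_eq_0_if_norm_minimal:
  fixes x0 k :: "'a::complex_inner"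
  assumes minimal: "\<And>t. norm x0 \<le> norm (x0 + scaleC t k)"
  shows "cinner k x0 = 0"
proof (cases "k = 0")
  case False
  define \<beta> where "\<beta> = cinner k x0"
  define n where "n = (norm k)\<^sup>2"
  define t where "t = - cnj \<beta> / of_real n"
  have "n > 0" using False by (simp add: n_def)
  have "cinner k k = of_real n" unfolding n_def by (rule cinner_self)
  then have "cinner (x0 + scaleC t k) (x0 + scaleC t k)
      = cinner x0 x0 + cnj t * cnj \<beta> + t * \<beta> + t * cnj t * of_real n"
    unfolding \<beta>_def
    by (simp add: cinner_add_left cinner_add_right cinner_scaleC_left cinner_scaleC_right
        cinner_commute[of x0 k] algebra_simps)
  also have "\<dots> = cinner x0 x0 - of_real ((cmod \<beta>)\<^sup>2 / n)"
    using \<open>n > 0\<close> complex_norm_square[of \<beta>] unfolding t_def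
    by (simp add: field_simps power2_eq_square)
  finally have "(norm (x0 + scaleC t k))\<^sup>2 = (norm x0)\<^sup>2 - (cmod \<beta>)\<^sup>2 / n"
    by (metis cinner_self of_real_diff of_real_eq_iff)
  moreover have "(norm x0)\<^sup>2 \<le> (norm (x0 + scaleC t k))\<^sup>2"
    using minimal[of t] by (simp add: power_mono)
  ultimately have "(cmod \<beta>)\<^sup>2 / n \<le> 0" by linarith
  with \<open>n > 0\<close> show ?thesis unfolding \<beta>_def by (simp add: divide_le_0_iff)
qed simp

lemma riesz_representation:
  fixes f :: "'a::chilbert_space \<Rightarrow> complex"
  assumes add: "\<And>x y. f (x + y) = f x + f y" and scale: "\<And>c x. f (scaleC c x) = c * f x"
    and bound: "\<And>x. cmod (f x) \<le> K * norm x"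
  obtains z where "\<And>x. f x = cinner x z"
proof (cases "\<forall>x. f x = 0")
  case True
  then show ?thesis using that[of 0] by simp
next
  case False
  then obtain x1 where "f x1 \<noteq> 0" by blast
  have scaleR: "f (scaleR r x) = of_real r * f x" for r x
    using scale[of "of_real r" x] by (simp add: scaleC_of_real)
  have diff: "f (x - y) = f x - f y" for x y
    using add[of "x - y" y] by simp
  have "bounded_linear f"
  proof
    show "f (x + y) = f x + f y" for x y by (rule add)
    show "f (scaleR r x) = scaleR r (f x)" for r x by (simp add: scaleR scaleR_conv_of_real)
    show "\<exists>K. \<forall>x. norm (f x) \<le> norm x * K" using bound by (metis mult.commute)
  qed
  define S where "S = {x. f x = 1}"
  have "closed S"
    unfolding S_def using \<open>bounded_linear f\<close>
    by (intro closed_Collect_eq continuous_on_const linear_continuous_on)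
  moreover have "scaleC (1 / f x1) x1 \<in> S" using \<open>f x1 \<noteq> 0\<close> by (simp add: S_def scale)
  moreover have "scaleR (1/2) (x + y) \<in> S" if "x \<in> S" "y \<in> S" for x y
    using that by (simp add: S_def scaleR add)
  ultimately obtain x0 where "x0 \<in> S" and x0_min: "\<And>y. y \<in> S \<Longrightarrow> norm x0 \<le> norm y"
    using norm_minimizer_exists by blast
  have x0_orth: "cinner k x0 = 0" if "f k = 0" for k
    using \<open>x0 \<in> S\<close> that by (intro cinner_eq_0_if_norm_minimal x0_min) (simp add: S_def add scale)
  have "x0 \<noteq> 0" using \<open>x0 \<in> S\<close> scaleR[of 0 0] by (auto simp: S_def)
  have "f x = cinner x (scaleR (1 / (norm x0)\<^sup>2) x0)" for x
  proof -
    have "cinner (x - scaleC (f x) x0) x0 = 0"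
      using \<open>x0 \<in> S\<close> by (intro x0_orth) (simp add: S_def diff scale)
    then have "cinner x x0 = f x * of_real ((norm x0)\<^sup>2)"
      by (simp add: cinner_diff_left cinner_scaleC_left cinner_self)
    then show ?thesis using \<open>x0 \<noteq> 0\<close> by (simp add: cinner_scaleR_right field_simps)
  qed
  then show ?thesis by (rule that)
qed

lemma bounded_clinear_add: "bounded_clinear T \<Longrightarrow> T (x + y) = T x + T y"
  unfolding bounded_clinear_def by (simp add: linear_simps)

lemma bounded_clinear_scaleC: "bounded_clinear T \<Longrightarrow> T (scaleC c x) = scaleC c (T x)"
  unfolding bounded_clinear_def by blast

lemma cinner_adj_right:
  fixes T :: "'a::chilbert_space \<Rightarrow> 'b::complex_inner"
  assumes T: "bounded_clinear T"
  shows "cinner x (adj T y) = cinner (T x) y"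
proof -
  obtain K where K: "\<And>x. norm (T x) \<le> norm x * K"
    using T unfolding bounded_clinear_def using bounded_linear.bounded by blast
  have "\<forall>y. \<exists>z. \<forall>x. cinner (T x) y = cinner x z"
  proof
    fix y
    have bound: "cmod (cinner (T x) y) \<le> (K * norm y) * norm x" for x
      using cinner_cauchy_schwarz[of "T x" y] mult_right_mono[OF K[of x], of "norm y"]
      by (simp add: algebra_simps)
    have add: "cinner (T (x + x')) y = cinner (T x) y + cinner (T x') y" for x x'
      using T by (simp add: bounded_clinear_add cinner_add_left)
    have scale: "cinner (T (scaleC c x)) y = c * cinner (T x) y" for c x
      using T by (simp add: bounded_clinear_scaleC cinner_scaleC_left)
    obtain z where "\<And>x. cinner (T x) y = cinner x z"
      using riesz_representation[of "\<lambda>x. cinner (T x) y" "K * norm y"] add scale bound by blast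
    then show "\<exists>z. \<forall>x. cinner (T x) y = cinner x z" by blast
  qed
  then have "\<exists>S. \<forall>x y. cinner (T x) y = cinner x (S y)"
    by (metis (full_types) choice)
  from someI_ex[OF this] have "\<forall>x y. cinner (T x) y = cinner x (adj T y)"
    unfolding adj_def .
  then show ?thesis by simp
qed

lemma cinner_adj_left:
  fixes T :: "'a::chilbert_space \<Rightarrow> 'b::complex_inner"
  assumes "bounded_clinear T"
  shows "cinner (adj T y) x = cinner y (T x)"
  using cinner_adj_right[OF assms, of x y] cinner_commute[of x "adj T y"] cinner_commute[of "T x" y]
  by simp

lemma adj_add:
  fixes T :: "'a::chilbert_space \<Rightarrow> 'b::complex_inner"
  assumes "bounded_clinear T"
  shows "adj T (x + y) = adj T x + adj T y"
  by (rule cinner_ext_right) (simp add: cinner_adj_right[OF assms] cinner_add_right)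

lemma adj_scaleC:
  fixes T :: "'a::chilbert_space \<Rightarrow> 'b::complex_inner"
  assumes "bounded_clinear T"
  shows "adj T (scaleC c x) = scaleC c (adj T x)"
  by (rule cinner_ext_right) (simp add: cinner_adj_right[OF assms] cinner_scaleC_right)

section \<open>The Arveson space\<close>

lemma arv_weight_pos: "arv_weight n > 0"
  unfolding arv_weight_def by (intro divide_pos_pos prod_pos) auto

lemma arv_weight_zero_index: "arv_weight (\<lambda>_. 0) = 1"
  by (simp add: arv_weight_def)

definition in_arveson_space :: "(('d::finite \<Rightarrow> nat) \<Rightarrow> 'y::complex_inner) \<Rightarrow> bool" where
  "in_arveson_space f \<longleftrightarrow> (\<lambda>n. arv_weight n * (norm (f n))\<^sup>2) summable_on UNIV"

lemma has_sum_arv_norm2: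
  "in_arveson_space f \<Longrightarrow> ((\<lambda>n. arv_weight n * (norm (f n))\<^sup>2) has_sum arv_norm2 f) UNIV"
  unfolding in_arveson_space_def arv_norm2_def by simp

lemma arv_inner_summand_bound:
  assumes "t > 0"
  shows "norm (of_real (arv_weight n) * cinner (f n) (g n))
    \<le> (t * (arv_weight n * (norm (f n))\<^sup>2) + arv_weight n * (norm (g n))\<^sup>2 / t) / 2"
proof -
  have young: "a * b \<le> (t * a\<^sup>2 + b\<^sup>2 / t) / 2" for a b :: real
  proof -
    have "0 \<le> (t * a - b)\<^sup>2 / t" using assms by simp
    also have "(t * a - b)\<^sup>2 / t = t * a\<^sup>2 + b\<^sup>2 / t - 2 * a * b"
      using assms by (simp add: power2_eq_square field_simps)
    finally show ?thesis by simp
  qed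
  have "norm (of_real (arv_weight n) * cinner (f n) (g n)) = arv_weight n * cmod (cinner (f n) (g n))"
    using arv_weight_pos[of n] by (simp add: norm_mult)
  also have "\<dots> \<le> arv_weight n * (norm (f n) * norm (g n))"
    using arv_weight_pos[of n] by (intro mult_left_mono cinner_cauchy_schwarz) simp
  also have "\<dots> \<le> arv_weight n * ((t * (norm (f n))\<^sup>2 + (norm (g n))\<^sup>2 / t) / 2)"
    using arv_weight_pos[of n] by (intro mult_left_mono young) simp
  also have "\<dots> = (t * (arv_weight n * (norm (f n))\<^sup>2) + arv_weight n * (norm (g n))\<^sup>2 / t) / 2"
    by (simp add: distrib_left)
  finally show ?thesis .
qed

lemma has_sum_arv_inner_summand_bound:
  assumes "in_arveson_space f" "in_arveson_space g"
  shows "((\<lambda>n. (t * (arv_weight n * (norm (f n))\<^sup>2) + arv_weight n * (norm (g n))\<^sup>2 / t) / 2)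
    has_sum (t * arv_norm2 f + arv_norm2 g / t) / 2) UNIV"
  using assms by (intro has_sum_divide_const has_sum_add has_sum_cmult_right has_sum_arv_norm2)

lemma arv_inner_abs_summable:
  assumes "in_arveson_space f" "in_arveson_space g"
  shows "(\<lambda>n. norm (of_real (arv_weight n) * cinner (f n) (g n))) summable_on UNIV"
  by (rule Infinite_Sum.abs_summable_on_comparison_test'
      [OF has_sum_imp_summable[OF has_sum_arv_inner_summand_bound[OF assms, of 1]]])
    (rule arv_inner_summand_bound, simp)

lemma arv_inner_add_left:
  assumes "in_arveson_space f1" "in_arveson_space f2" "in_arveson_space g"
  shows "arv_inner (\<lambda>n. f1 n + f2 n) g = arv_inner f1 g + arv_inner f2 g"
  unfolding arv_inner_def cinner_add_left distrib_left
  using abs_summable_summable[OF arv_inner_abs_summable[OF assms(1,3)]]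
    abs_summable_summable[OF arv_inner_abs_summable[OF assms(2,3)]]
  by (rule infsum_add)

lemma arv_inner_scaleC_left: "arv_inner (\<lambda>n. scaleC c (f n)) g = c * arv_inner f g"
proof -
  have "(\<lambda>n. of_real (arv_weight n) * cinner (scaleC c (f n)) (g n))
      = (\<lambda>n. c * (of_real (arv_weight n) * cinner (f n) (g n)))"
    by (simp add: cinner_scaleC_left mult.left_commute)
  then show ?thesis unfolding arv_inner_def by (simp add: infsum_cmult_right')
qed

lemma arv_inner_commute: "arv_inner g f = cnj (arv_inner f g)"
proof -
  have "(\<lambda>n. of_real (arv_weight n) * cinner (g n) (f n))
      = (\<lambda>n. cnj (of_real (arv_weight n) * cinner (f n) (g n)))"
    by (simp add: cinner_commute[of "g _"])
  then show ?thesis unfolding arv_inner_def by (simp only: infsum_cnj)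
qed

lemma arv_inner_self:
  assumes "in_arveson_space f"
  shows "arv_inner f f = of_real (arv_norm2 f)"
proof -
  have "((\<lambda>n. of_real (arv_weight n) * cinner (f n) (f n)) has_sum of_real (arv_norm2 f)) UNIV"
    using has_sum_of_real[OF has_sum_arv_norm2[OF assms]] by (simp add: cinner_self)
  then show ?thesis unfolding arv_inner_def by (rule infsumI)
qed

lemma arv_inner_bound:
  assumes "in_arveson_space f" "in_arveson_space g" "t > 0"
  shows "cmod (arv_inner f g) \<le> (t * arv_norm2 f + arv_norm2 g / t) / 2"
proof -
  have "cmod (arv_inner f g) \<le> (\<Sum>\<^sub>\<infinity>n. norm (of_real (arv_weight n) * cinner (f n) (g n)))"
    unfolding arv_inner_def by (rule norm_infsum_bound[OF arv_inner_abs_summable[OF assms(1,2)]])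
  also have "\<dots> \<le> (t * arv_norm2 f + arv_norm2 g / t) / 2"
    by (rule has_sum_mono[OF has_sum_infsum[OF arv_inner_abs_summable[OF assms(1,2)]]
          has_sum_arv_inner_summand_bound[OF assms(1,2)]])
      (rule arv_inner_summand_bound[OF assms(3)])
  finally show ?thesis .
qed

section \<open>Words and their abelianization\<close>

lemma bounded_clinear_wordop:
  assumes "\<And>i. bounded_clinear (A i)"
  shows "bounded_clinear (wordop A v)"
proof (induction v)
  case Nil
  show ?case unfolding bounded_clinear_def by (simp add: bounded_linear_ident id_def)
next
  case (Cons i v)
  then show ?case
    using assms[of i] bounded_linear_compose[of "A i" "wordop A v"]
    unfolding bounded_clinear_def by (simp add: comp_def)
qed

lemma wordop_append: "wordop A (u @ v) = wordop A u \<circ> wordop A v"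
  by (induction u) auto

lemma abel_Nil: "abel [] = (\<lambda>_. 0)"
  by (simp add: abel_def fun_eq_iff)

lemma abel_snoc: "abel (v @ [i]) = (abel v)(i := Suc (abel v i))"
  by (simp add: abel_def fun_eq_iff)

definition mdegree :: "('d::finite \<Rightarrow> nat) \<Rightarrow> nat" where
  "mdegree m = (\<Sum>k\<in>UNIV. m k)"

lemma mdegree_pos_iff: "0 < mdegree m \<longleftrightarrow> m \<noteq> (\<lambda>_. 0)"
  unfolding mdegree_def fun_eq_iff by (simp add: sum_eq_0_iff flip: neq0_conv)

lemma mdegree_abel: "mdegree (abel v) = length v"
  unfolding mdegree_def abel_def by (rule sum_count_set) auto

lemma finite_words_of: "finite (words_of (m :: 'd::finite \<Rightarrow> nat))"
proof (rule finite_subset)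
  show "words_of m \<subseteq> {v. set v \<subseteq> UNIV \<and> length v = mdegree m}"
    unfolding words_of_def by (auto simp: mdegree_abel mdegree_def[symmetric])
qed (rule finite_lists_length_eq, simp)

lemma words_of_zero: "words_of ((\<lambda>_. 0) :: 'd::finite \<Rightarrow> nat) = {[]}"
proof -
  have "v = []" if "abel v = (\<lambda>_. 0)" for v :: "'d list"
    using mdegree_abel[of v] that by (simp add: mdegree_def)
  then show ?thesis unfolding words_of_def by (auto simp: abel_Nil)
qed

lemma words_of_decomp:
  fixes m :: "'d::finite \<Rightarrow> nat"
  assumes "m \<noteq> (\<lambda>_. 0)"
  shows "words_of m = (\<Union>i\<in>{i. 0 < m i}. (\<lambda>u. u @ [i]) ` words_of (m(i := m i - 1)))"
proof (intro equalityI subsetI)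
  fix v assume "v \<in> words_of m"
  then have "abel v = m" by (simp add: words_of_def)
  then have "v \<noteq> []" using assms abel_Nil by auto
  then obtain u i where v: "v = u @ [i]" by (metis append_butlast_last_id)
  with \<open>abel v = m\<close> have "m = (abel u)(i := Suc (abel u i))" by (simp add: abel_snoc)
  then show "v \<in> (\<Union>i\<in>{i. 0 < m i}. (\<lambda>u. u @ [i]) ` words_of (m(i := m i - 1)))"
    using v by (auto simp: words_of_def)
next
  fix v assume "v \<in> (\<Union>i\<in>{i. 0 < m i}. (\<lambda>u. u @ [i]) ` words_of (m(i := m i - 1)))"
  then obtain i u where "0 < m i" "abel u = m(i := m i - 1)" "v = u @ [i]"
    by (auto simp: words_of_def)
  then show "v \<in> words_of m" by (auto simp: words_of_def abel_snoc)
qed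

lemma sum_words_of_decomp:
  fixes m :: "'d::finite \<Rightarrow> nat"
  assumes "m \<noteq> (\<lambda>_. 0)"
  shows "(\<Sum>v\<in>words_of m. f v) = (\<Sum>i | 0 < m i. \<Sum>u\<in>words_of (m(i := m i - 1)). f (u @ [i]))"
proof -
  have "(\<Sum>v\<in>words_of m. f v) = (\<Sum>i | 0 < m i. \<Sum>v\<in>(\<lambda>u. u @ [i]) ` words_of (m(i := m i - 1)). f v)"
    unfolding words_of_decomp[OF assms]
    by (rule sum.UNION_disjoint) (auto simp: finite_words_of)
  also have "\<dots> = (\<Sum>i | 0 < m i. \<Sum>u\<in>words_of (m(i := m i - 1)). f (u @ [i]))"
    by (intro sum.cong refl sum.reindex_cong[where l = "\<lambda>u. u @ [_]"]) (auto simp: inj_on_def)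
  finally show ?thesis .
qed

lemma sum_UNIV_fun_upd:
  "(\<Sum>k\<in>UNIV. g ((f(i := x)) k)) = g x + (\<Sum>k\<in>UNIV - {i}. g (f (k :: 'd::finite)))"
proof -
  have "(\<Sum>k\<in>UNIV - {i}. g ((f(i := x)) k)) = (\<Sum>k\<in>UNIV - {i}. g (f k))"
    by (rule sum.cong) auto
  then show ?thesis using sum.remove[of UNIV i "\<lambda>k. g ((f(i := x)) k)"] by simp
qed

lemma prod_UNIV_fun_upd:
  "(\<Prod>k\<in>UNIV. g ((f(i := x)) k)) = g x * (\<Prod>k\<in>UNIV - {i}. g (f (k :: 'd::finite)))"
proof -
  have "(\<Prod>k\<in>UNIV - {i}. g ((f(i := x)) k)) = (\<Prod>k\<in>UNIV - {i}. g (f k))"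
    by (rule prod.cong) auto
  then show ?thesis using prod.remove[of UNIV i "\<lambda>k. g ((f(i := x)) k)"] by simp
qed

lemma mdegree_decrement:
  assumes "0 < m i"
  shows "Suc (mdegree (m(i := m i - 1))) = mdegree m"
  unfolding mdegree_def
  using sum_UNIV_fun_upd[of "\<lambda>n. n" m i "m i - 1"] sum_UNIV_fun_upd[of "\<lambda>n. n" m i "m i"] assms
  by simp

lemma arv_weight_decrement:
  fixes m :: "'d::finite \<Rightarrow> nat"
  assumes "0 < m i"
  shows "arv_weight (m(i := m i - 1)) * m i = arv_weight m * mdegree m"
proof -
  let ?m' = "m(i := m i - 1)"
  have "(\<Prod>k\<in>UNIV. fact (m k) :: real) = m i * (\<Prod>k\<in>UNIV. fact (?m' k))"
    using prod_UNIV_fun_upd[of "fact :: nat \<Rightarrow> real" m i "m i"]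
      prod_UNIV_fun_upd[of "fact :: nat \<Rightarrow> real" m i "m i - 1"]
      fact_reduce[OF assms] by simp
  moreover have "(fact (mdegree m) :: real) = real (mdegree m) * fact (mdegree ?m')"
    unfolding mdegree_decrement[of m i, OF assms, symmetric] by (rule fact_Suc)
  moreover have "mdegree m > 0"
    unfolding mdegree_decrement[of m i, OF assms, symmetric] by simp
  ultimately show ?thesis
    unfolding arv_weight_def mdegree_def[symmetric] by (simp add: field_simps)
qed

lemma sum_pos_eq_mdegree: "(\<Sum>i | 0 < m i. m i) = mdegree m"
  unfolding mdegree_def by (rule sum.mono_neutral_left) auto

lemma card_words_of_mult_arv_weight: "real (card (words_of m)) * arv_weight (m :: 'd::finite \<Rightarrow> nat) = 1"
proof (induction "mdegree m" arbitrary: m)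
  case 0
  then have "m = (\<lambda>_. 0)" using mdegree_pos_iff[of m] by simp
  then show ?case by (simp add: words_of_zero arv_weight_def)
next
  case (Suc n)
  then have "m \<noteq> (\<lambda>_. 0)" using mdegree_pos_iff[of m] by simp
  have "card (words_of m) = (\<Sum>i | 0 < m i. card (words_of (m(i := m i - 1))))"
    using sum_words_of_decomp[OF \<open>m \<noteq> (\<lambda>_. 0)\<close>, of "\<lambda>_. 1::nat"] by simp
  also have "real \<dots> = (\<Sum>i | 0 < m i. real (m i) / (arv_weight m * Suc n))"
    unfolding of_nat_sum
  proof (intro sum.cong refl)
    fix i assume "i \<in> {i. 0 < m i}"
    then have "0 < m i" by simp
    then have "real (card (words_of (m(i := m i - 1)))) * arv_weight (m(i := m i - 1)) = 1"
      using Suc mdegree_decrement[of m i] by simp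
    then have "real (card (words_of (m(i := m i - 1))))
        = real (m i) / (arv_weight (m(i := m i - 1)) * real (m i))"
      using \<open>0 < m i\<close> arv_weight_pos[of "m(i := m i - 1)"] by (simp add: field_simps)
    then show "real (card (words_of (m(i := m i - 1)))) = real (m i) / (arv_weight m * Suc n)"
      unfolding arv_weight_decrement[of m i, OF \<open>0 < m i\<close>, folded Suc.hyps(2)] .
  qed
  also have "\<dots> = 1 / arv_weight m"
    using arv_weight_pos[of m] sum_pos_eq_mdegree[of m] Suc.hyps(2)
    by (simp add: sum_divide_distrib[symmetric] of_nat_sum[symmetric] del: of_nat_sum)
  finally show ?case using arv_weight_pos[of m] by (simp add: field_simps)
qed

lemma has_sum_decrement_reindex:
  fixes g :: "('d \<Rightarrow> nat) \<Rightarrow> 'a::topological_comm_monoid_add"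
  shows "((\<lambda>m. if 0 < m i then g (m(i := m i - 1)) else 0) has_sum S) UNIV \<longleftrightarrow> (g has_sum S) UNIV"
proof -
  let ?f = "\<lambda>m. if 0 < m i then g (m(i := m i - 1)) else 0"
  have "bij_betw (\<lambda>n. n(i := Suc (n i))) UNIV {m. 0 < m i}"
    by (rule bij_betwI[where g = "\<lambda>m. m(i := m i - 1)"]) auto
  then have "((\<lambda>n. ?f (n(i := Suc (n i)))) has_sum S) UNIV \<longleftrightarrow> (?f has_sum S) {m. 0 < m i}"
    by (rule has_sum_reindex_bij_betw)
  also have "(?f has_sum S) {m. 0 < m i} \<longleftrightarrow> (?f has_sum S) UNIV"
    by (rule has_sum_cong_neutral) auto
  finally show ?thesis by simp
qed

lemma has_sum_words_iff:
  fixes f :: "'d::finite list \<Rightarrow> real"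
  assumes "\<And>v. 0 \<le> f v"
  shows "(f has_sum S) UNIV \<longleftrightarrow> ((\<lambda>m. \<Sum>v\<in>words_of m. f v) has_sum S) UNIV"
proof -
  have inner: "((\<lambda>v. f (snd (m, v))) has_sum (\<Sum>v\<in>words_of m. f v)) (words_of m)" for m
    by (simp add: finite_words_of has_sum_finite)
  have "bij_betw snd (Sigma UNIV words_of) UNIV"
    by (rule bij_betwI[where g = "\<lambda>v. (abel v, v)"]) (auto simp: words_of_def)
  then have "(f has_sum S) UNIV \<longleftrightarrow> ((\<lambda>p. f (snd p)) has_sum S) (Sigma UNIV words_of)"
    by (rule has_sum_reindex_bij_betw[symmetric])
  also have "\<dots> \<longleftrightarrow> ((\<lambda>m. \<Sum>v\<in>words_of m. f v) has_sum S) UNIV"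
  proof
    assume "((\<lambda>p. f (snd p)) has_sum S) (Sigma UNIV words_of)"
    then show "((\<lambda>m. \<Sum>v\<in>words_of m. f v) has_sum S) UNIV"
      by (rule has_sum_SigmaD) (rule inner)
  next
    assume grouped: "((\<lambda>m. \<Sum>v\<in>words_of m. f v) has_sum S) UNIV"
    have "(\<lambda>p. f (snd p)) summable_on Sigma UNIV words_of"
      using inner has_sum_imp_summable[OF grouped] assms by (rule summable_on_SigmaI)
    then show "((\<lambda>p. f (snd p)) has_sum S) (Sigma UNIV words_of)"
      using inner grouped by (rule has_sum_SigmaI[rotated 2])
  qed
  finally show ?thesis .
qed

lemma sum_words_of_norm_sq:
  fixes a :: "'d::finite list \<Rightarrow> 'y::complex_inner"
  shows "(\<Sum>v\<in>words_of m. (norm (a v))\<^sup>2) = arv_weight m * (norm (\<Sum>v\<in>words_of m. a v))\<^sup>2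
    + (\<Sum>v\<in>words_of m. (norm (a v - scaleR (arv_weight m) (\<Sum>u\<in>words_of m. a u)))\<^sup>2)"
proof -
  have "(\<Sum>v\<in>words_of m. arv_weight m) = 1"
    using card_words_of_mult_arv_weight[of m] by simp
  from weighted_variance_identity[OF finite_words_of arv_weight_pos this, of a]
  have "(\<Sum>v\<in>words_of m. (norm (a v))\<^sup>2) / arv_weight m - (norm (\<Sum>v\<in>words_of m. a v))\<^sup>2
      = (\<Sum>v\<in>words_of m. (norm (a v - scaleR (arv_weight m) (\<Sum>u\<in>words_of m. a u)))\<^sup>2) / arv_weight m"
    by (simp add: sum_divide_distrib)
  then show ?thesis using arv_weight_pos[of m] by (simp add: field_simps)
qed

section \<open>The abelianized observability gramian\<close>

lemma obs_coeff_zero_index: "obs_coeff C (A :: 'd::finite \<Rightarrow> _) x (\<lambda>_. 0) = C x"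
  by (simp add: obs_coeff_def words_of_zero)

lemma obs_coeff_decomp:
  fixes A :: "'d::finite \<Rightarrow> 'x \<Rightarrow> 'x"
  assumes "m \<noteq> (\<lambda>_. 0)"
  shows "obs_coeff C A x m = (\<Sum>i | 0 < m i. obs_coeff C A (A i x) (m(i := m i - 1)))"
  unfolding obs_coeff_def sum_words_of_decomp[OF assms] by (simp add: wordop_append)

locale bounded_output_pair =
  fixes C :: "'x::chilbert_space \<Rightarrow> 'y::chilbert_space" and A :: "'d::finite \<Rightarrow> 'x \<Rightarrow> 'x"
  assumes bounded_C: "bounded_clinear C" and bounded_A: "\<And>i. bounded_clinear (A i)"
begin

lemma bounded_wordop: "bounded_clinear (wordop A v)"
  using bounded_A by (rule bounded_clinear_wordop)

lemma obs_coeff_add: "obs_coeff C A (x + y) = (\<lambda>n. obs_coeff C A x n + obs_coeff C A y n)"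
  unfolding obs_coeff_def
  by (simp add: bounded_clinear_add[OF bounded_wordop] bounded_clinear_add[OF bounded_C] sum.distrib)

lemma obs_coeff_scaleC: "obs_coeff C A (scaleC c x) = (\<lambda>n. scaleC c (obs_coeff C A x n))"
  unfolding obs_coeff_def
  by (simp add: bounded_clinear_scaleC[OF bounded_wordop] bounded_clinear_scaleC[OF bounded_C]
      scaleC_sum_right)

lemma obs_coeff_zero: "obs_coeff C A 0 = (\<lambda>_. 0)"
  using obs_coeff_add[of 0 0] by (simp add: fun_eq_iff)

end

locale a_output_stable_pair = bounded_output_pair +
  assumes stable: "a_output_stable C A"
begin

lemma in_arveson_space_obs_coeff: "in_arveson_space (obs_coeff C A x)"
  using stable unfolding a_output_stable_def in_arveson_space_def by blast

lemma has_sum_obs_norm2: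
  "((\<lambda>n. arv_weight n * (norm (obs_coeff C A x n))\<^sup>2) has_sum arv_norm2 (obs_coeff C A x)) UNIV"
  by (rule has_sum_arv_norm2[OF in_arveson_space_obs_coeff])

lemma obs_norm2_bound:
  obtains M where "M > 0" "\<And>x. arv_norm2 (obs_coeff C A x) \<le> M * (norm x)\<^sup>2"
proof -
  obtain M where M: "\<And>x. arv_norm2 (obs_coeff C A x) \<le> M * (norm x)\<^sup>2"
    using stable unfolding a_output_stable_def by blast
  have "arv_norm2 (obs_coeff C A x) \<le> max M 1 * (norm x)\<^sup>2" for x
    using M[of x] by (meson order.trans max.cobounded1 mult_right_mono zero_le_power2)
  then show ?thesis using that[of "max M 1"] by simp
qed

lemma arv_inner_obs_coeff_bound:
  obtains K where "\<And>x y. cmod (arv_inner (obs_coeff C A y) (obs_coeff C A x)) \<le> K * norm x * norm y"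
proof -
  let ?O = "obs_coeff C A"
  obtain M where "M > 0" and M: "\<And>x. arv_norm2 (?O x) \<le> M * (norm x)\<^sup>2"
    using obs_norm2_bound by blast
  have "cmod (arv_inner (?O y) (?O x)) \<le> M * norm x * norm y" for x y
  proof (cases "x = 0 \<or> y = 0")
    case True
    then have "?O y = (\<lambda>_. 0) \<or> ?O x = (\<lambda>_. 0)"
      using obs_coeff_zero by auto
    then show ?thesis using \<open>M > 0\<close> by (auto simp: arv_inner_def)
  next
    case False
    define t where "t = norm x / norm y"
    have "t > 0" using False by (simp add: t_def)
    have "cmod (arv_inner (?O y) (?O x)) \<le> (t * arv_norm2 (?O y) + arv_norm2 (?O x) / t) / 2"
      using \<open>t > 0\<close> in_arveson_space_obs_coeff by (rule_tac arv_inner_bound) auto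
    also have "\<dots> \<le> (t * (M * (norm y)\<^sup>2) + (M * (norm x)\<^sup>2) / t) / 2"
      using \<open>t > 0\<close> M[of x] M[of y] by (intro divide_right_mono add_mono mult_left_mono) auto
    also have "\<dots> = M * norm x * norm y"
      using False unfolding t_def by (simp add: field_simps power2_eq_square)
    finally show ?thesis .
  qed
  then show ?thesis by (rule that)
qed

lemma cinner_gram_a: "cinner (gram_a C A x) y = arv_inner (obs_coeff C A x) (obs_coeff C A y)"
proof -
  let ?O = "obs_coeff C A"
  obtain K where bound: "\<And>x y. cmod (arv_inner (?O y) (?O x)) \<le> K * norm x * norm y"
    using arv_inner_obs_coeff_bound by blast
  have "\<forall>x. \<exists>z. \<forall>y. arv_inner (?O y) (?O x) = cinner y z"
  proof
    fix x
    have add: "arv_inner (?O (y + y')) (?O x) = arv_inner (?O y) (?O x) + arv_inner (?O y') (?O x)"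
      for y y'
      unfolding obs_coeff_add
      by (rule arv_inner_add_left) (rule in_arveson_space_obs_coeff)+
    have scale: "arv_inner (?O (scaleC c y)) (?O x) = c * arv_inner (?O y) (?O x)" for c y
      unfolding obs_coeff_scaleC by (rule arv_inner_scaleC_left)
    obtain z where "\<And>y. arv_inner (?O y) (?O x) = cinner y z"
      using riesz_representation[of "\<lambda>y. arv_inner (?O y) (?O x)" "K * norm x"] add scale bound
      by blast
    then show "\<exists>z. \<forall>y. arv_inner (?O y) (?O x) = cinner y z" by blast
  qed
  then obtain G where G: "\<And>x y. arv_inner (?O y) (?O x) = cinner y (G x)"
    by metis
  have "\<forall>x y. cinner (G x) y = arv_inner (?O x) (?O y)"
    using G by (metis arv_inner_commute cinner_commute)
  then have "\<exists>G. \<forall>x y. cinner (G x) y = arv_inner (?O x) (?O y)" by blast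
  from someI_ex[OF this] have "\<forall>x y. cinner (gram_a C A x) y = arv_inner (?O x) (?O y)"
    unfolding gram_a_def .
  then show ?thesis by blast
qed

lemma cinner_gram_a_self: "cinner (gram_a C A x) x = of_real (arv_norm2 (obs_coeff C A x))"
  unfolding cinner_gram_a by (rule arv_inner_self[OF in_arveson_space_obs_coeff])

lemma gram_a_add: "gram_a C A (x + y) = gram_a C A x + gram_a C A y"
  by (rule cinner_ext_left)
    (simp add: cinner_add_left cinner_gram_a obs_coeff_add
      arv_inner_add_left in_arveson_space_obs_coeff)

lemma gram_a_scaleC: "gram_a C A (scaleC c x) = scaleC c (gram_a C A x)"
  by (rule cinner_ext_left)
    (simp add: cinner_scaleC_left cinner_gram_a obs_coeff_scaleC
      arv_inner_scaleC_left)

end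

section \<open>The Stein gap\<close>

definition stein_gap :: "('x \<Rightarrow> 'y::complex_inner) \<Rightarrow> ('d::finite \<Rightarrow> 'x \<Rightarrow> 'x) \<Rightarrow> 'x \<Rightarrow> real"
  where "stein_gap C A x =
    (norm (C x))\<^sup>2 - arv_norm2 (obs_coeff C A x) + (\<Sum>i\<in>UNIV. arv_norm2 (obs_coeff C A (A i x)))"

text \<open>Writing \<open>\<parallel>\<hat>\<O>(A\<^sub>i x)\<parallel>\<^sup>2\<close> as a sum over \<open>m = n + e\<^sub>i\<close> instead of \<open>n\<close> splits
  \<open>stein_gap C A x\<close> into one term per multi-index \<open>m\<close>.\<close>

definition stein_gap_term ::
  "('x \<Rightarrow> 'y::complex_inner) \<Rightarrow> ('d::finite \<Rightarrow> 'x \<Rightarrow> 'x) \<Rightarrow> 'x \<Rightarrow> ('d \<Rightarrow> nat) \<Rightarrow> real"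
  where "stein_gap_term C A x m =
    (\<Sum>i | 0 < m i. arv_weight (m(i := m i - 1)) * (norm (obs_coeff C A (A i x) (m(i := m i - 1))))\<^sup>2)
    - arv_weight m * (norm (obs_coeff C A x m))\<^sup>2 + (if m = (\<lambda>_. 0) then (norm (C x))\<^sup>2 else 0)"

lemma stein_gap_term_zero_index: "stein_gap_term C A x (\<lambda>_. 0) = 0"
  by (simp add: stein_gap_term_def obs_coeff_zero_index arv_weight_zero_index)

lemma stein_gap_term_eq_variance:
  assumes "m \<noteq> (\<lambda>_. 0)"
  shows "stein_gap_term C A x m = arv_weight m *
    (\<Sum>i | 0 < m i. (norm (obs_coeff C A (A i x) (m(i := m i - 1))
        - scaleR (m i / mdegree m) (obs_coeff C A x m)))\<^sup>2 / (m i / mdegree m))"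
proof -
  define I where "I = {i. 0 < m i}"
  define p where "p i = real (m i) / real (mdegree m)" for i
  define c where "c i = obs_coeff C A (A i x) (m(i := m i - 1))" for i
  have "mdegree m > 0" using assms mdegree_pos_iff by blast
  have p_pos: "p i > 0" if "i \<in> I" for i
    using that \<open>mdegree m > 0\<close> by (simp add: p_def I_def)
  have p_sum: "(\<Sum>i\<in>I. p i) = 1"
    using \<open>mdegree m > 0\<close> sum_pos_eq_mdegree[of m] unfolding p_def I_def
    by (simp add: sum_divide_distrib[symmetric] of_nat_sum[symmetric] del: of_nat_sum)
  have weight: "arv_weight (m(i := m i - 1)) = arv_weight m / p i" if "i \<in> I" for i
    using arv_weight_decrement[of m i] that \<open>mdegree m > 0\<close>
    unfolding p_def I_def by (simp add: field_simps)
  have "(\<Sum>i\<in>I. arv_weight (m(i := m i - 1)) * (norm (c i))\<^sup>2)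
      = arv_weight m * (\<Sum>i\<in>I. (norm (c i))\<^sup>2 / p i)"
    unfolding sum_distrib_left
  proof (rule sum.cong[OF refl])
    fix i assume "i \<in> I"
    show "arv_weight (m(i := m i - 1)) * (norm (c i))\<^sup>2 = arv_weight m * ((norm (c i))\<^sup>2 / p i)"
      unfolding weight[OF \<open>i \<in> I\<close>] by simp
  qed
  then have "stein_gap_term C A x m
      = arv_weight m * ((\<Sum>i\<in>I. (norm (c i))\<^sup>2 / p i) - (norm (\<Sum>i\<in>I. c i))\<^sup>2)"
    using assms unfolding stein_gap_term_def obs_coeff_decomp[OF assms]
    by (simp add: c_def I_def right_diff_distrib)
  also have "\<dots> = arv_weight m * (\<Sum>i\<in>I. (norm (c i - scaleR (p i) (\<Sum>j\<in>I. c j)))\<^sup>2 / p i)"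
    by (subst weighted_variance_identity[OF _ p_pos p_sum]) (simp_all add: I_def)
  finally show ?thesis
    unfolding c_def p_def I_def obs_coeff_decomp[OF assms, symmetric] .
qed

lemma stein_gap_term_nonneg: "0 \<le> stein_gap_term C A x m"
proof (cases "m = (\<lambda>_. 0)")
  case False
  then have "mdegree m > 0" using mdegree_pos_iff by blast
  then show ?thesis
    unfolding stein_gap_term_eq_variance[OF False]
    by (intro mult_nonneg_nonneg sum_nonneg divide_nonneg_nonneg less_imp_le[OF arv_weight_pos]) auto
qed (simp add: stein_gap_term_zero_index)

lemma stein_gap_term_eq_0_iff:
  assumes "m \<noteq> (\<lambda>_. 0)"
  shows "stein_gap_term C A x m = 0 \<longleftrightarrow>
    (\<forall>i. 0 < m i \<longrightarrow> obs_coeff C A (A i x) (m(i := m i - 1))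
        = scaleR (m i / mdegree m) (obs_coeff C A x m))"
proof -
  let ?t = "\<lambda>i. (norm (obs_coeff C A (A i x) (m(i := m i - 1))
      - scaleR (m i / mdegree m) (obs_coeff C A x m)))\<^sup>2 / (m i / mdegree m)"
  have "mdegree m > 0" using assms mdegree_pos_iff by blast
  have "stein_gap_term C A x m = 0 \<longleftrightarrow> (\<Sum>i | 0 < m i. ?t i) = 0"
    unfolding stein_gap_term_eq_variance[OF assms] using arv_weight_pos[of m] by simp
  also have "\<dots> \<longleftrightarrow> (\<forall>i\<in>{i. 0 < m i}. ?t i = 0)"
    by (rule sum_nonneg_eq_0_iff) auto
  finally show ?thesis using \<open>mdegree m > 0\<close> by auto
qed

lemma C_abelian_iff_word_average:
  fixes C :: "'x \<Rightarrow> 'y::real_vector" and A :: "'d::finite \<Rightarrow> 'x \<Rightarrow> 'x"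
  shows "C_abelian C A \<longleftrightarrow>
    (\<forall>v x. C (wordop A v x) = scaleR (arv_weight (abel v)) (obs_coeff C A x (abel v)))"
proof
  assume abelian: "C_abelian C A"
  show "\<forall>v x. C (wordop A v x) = scaleR (arv_weight (abel v)) (obs_coeff C A x (abel v))"
  proof (intro allI)
    fix v x
    have "C (wordop A u x) = C (wordop A v x)" if "u \<in> words_of (abel v)" for u
    proof -
      have "abel u = abel v" using that by (simp add: words_of_def)
      then have "C \<circ> wordop A u = C \<circ> wordop A v" using abelian unfolding C_abelian_def by blast
      then show ?thesis by (simp add: fun_eq_iff)
    qed
    then have "obs_coeff C A x (abel v) = scaleR (card (words_of (abel v))) (C (wordop A v x))"
      unfolding obs_coeff_def by (simp add: sum_constant_scaleR cong: sum.cong)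
    then show "C (wordop A v x) = scaleR (arv_weight (abel v)) (obs_coeff C A x (abel v))"
      using card_words_of_mult_arv_weight[of "abel v"] by (simp add: mult.commute)
  qed
next
  assume average: "\<forall>v x. C (wordop A v x) = scaleR (arv_weight (abel v)) (obs_coeff C A x (abel v))"
  show "C_abelian C A"
    unfolding C_abelian_def
  proof (intro allI impI ext)
    fix u v :: "'d list" and x assume "abel v = abel u"
    then show "(C \<circ> wordop A v) x = (C \<circ> wordop A u) x" using average by simp
  qed
qed

lemma word_average_if_stein_gap_terms_eq_0:
  fixes C :: "'x \<Rightarrow> 'y::complex_inner" and A :: "'d::finite \<Rightarrow> 'x \<Rightarrow> 'x"
  assumes "\<And>x m. stein_gap_term C A x m = 0"
  shows "C (wordop A v x) = scaleR (arv_weight (abel v)) (obs_coeff C A x (abel v))"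
proof (induction v arbitrary: x rule: rev_induct)
  case Nil
  show ?case by (simp add: abel_Nil arv_weight_zero_index obs_coeff_zero_index)
next
  case (snoc i v)
  define m where "m = abel (v @ [i])"
  have "0 < m i" and m_decr: "m(i := m i - 1) = abel v" and "m \<noteq> (\<lambda>_. 0)"
    by (auto simp: m_def abel_snoc fun_eq_iff)
  have IH: "C (wordop A (v @ [i]) x) = scaleR (arv_weight (abel v)) (obs_coeff C A (A i x) (abel v))"
    using snoc.IH[of "A i x"] by (simp add: wordop_append)
  have "obs_coeff C A (A i x) (m(i := m i - 1)) = scaleR (m i / mdegree m) (obs_coeff C A x m)"
    using assms stein_gap_term_eq_0_iff[OF \<open>m \<noteq> (\<lambda>_. 0)\<close>, of C A x] \<open>0 < m i\<close> by blast
  then have step: "obs_coeff C A (A i x) (abel v) = scaleR (m i / mdegree m) (obs_coeff C A x m)"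
    unfolding m_decr .
  have "arv_weight (m(i := m i - 1)) * (m i / mdegree m) = arv_weight m"
    using arv_weight_decrement[of m i, OF \<open>0 < m i\<close>] \<open>m \<noteq> (\<lambda>_. 0)\<close> mdegree_pos_iff[of m]
    by (simp add: field_simps)
  then have weight: "arv_weight (abel v) * (m i / mdegree m) = arv_weight m"
    unfolding m_decr .
  show ?case unfolding m_def[symmetric] IH step weight[symmetric] by simp
qed

lemma stein_gap_terms_eq_0_if_word_average:
  fixes C :: "'x \<Rightarrow> 'y::complex_inner" and A :: "'d::finite \<Rightarrow> 'x \<Rightarrow> 'x"
  assumes average: "\<And>v x. C (wordop A v x) = scaleR (arv_weight (abel v)) (obs_coeff C A x (abel v))"
  shows "stein_gap_term C A x m = 0"
proof (cases "m = (\<lambda>_. 0)")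
  case False
  have "obs_coeff C A (A i x) (m(i := m i - 1)) = scaleR (m i / mdegree m) (obs_coeff C A x m)"
    if "0 < m i" for i
  proof -
    let ?m' = "m(i := m i - 1)"
    have "C (wordop A u (A i x)) = scaleR (arv_weight m) (obs_coeff C A x m)"
      if "u \<in> words_of ?m'" for u
    proof -
      have "abel (u @ [i]) = m" using that \<open>0 < m i\<close> by (auto simp: words_of_def abel_snoc)
      then show ?thesis using average[of "u @ [i]" x] by (simp add: wordop_append)
    qed
    then have "obs_coeff C A (A i x) ?m' = (\<Sum>u\<in>words_of ?m'. scaleR (arv_weight m) (obs_coeff C A x m))"
      unfolding obs_coeff_def by (rule sum.cong[OF refl])
    also have "\<dots> = scaleR (card (words_of ?m') * arv_weight m) (obs_coeff C A x m)"
      by (simp add: sum_constant_scaleR)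
    also have "card (words_of ?m') * arv_weight m = m i / mdegree m"
    proof -
      have "mdegree m > 0" using False mdegree_pos_iff by blast
      then have "arv_weight m = arv_weight ?m' * m i / mdegree m"
        using arv_weight_decrement[of m i, OF \<open>0 < m i\<close>] by (simp add: eq_divide_eq)
      then have "card (words_of ?m') * arv_weight m = (card (words_of ?m') * arv_weight ?m') * m i / mdegree m"
        by simp
      then show ?thesis using card_words_of_mult_arv_weight[of ?m'] by simp
    qed
    finally show ?thesis .
  qed
  then have "\<forall>i. 0 < m i \<longrightarrow>
      obs_coeff C A (A i x) (m(i := m i - 1)) = scaleR (m i / mdegree m) (obs_coeff C A x m)"
    by blast
  then show ?thesis by (simp only: stein_gap_term_eq_0_iff[OF False])
qed (simp add: stein_gap_term_zero_index)

lemma C_abelian_iff_stein_gap_terms_eq_0: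
  fixes C :: "'x \<Rightarrow> 'y::complex_inner" and A :: "'d::finite \<Rightarrow> 'x \<Rightarrow> 'x"
  shows "C_abelian C A \<longleftrightarrow> (\<forall>x m. stein_gap_term C A x m = 0)"
proof
  assume "C_abelian C A"
  then have "\<forall>v x. C (wordop A v x) = scaleR (arv_weight (abel v)) (obs_coeff C A x (abel v))"
    unfolding C_abelian_iff_word_average .
  then show "\<forall>x m. stein_gap_term C A x m = 0"
    by (intro allI stein_gap_terms_eq_0_if_word_average) blast
next
  assume "\<forall>x m. stein_gap_term C A x m = 0"
  then show "C_abelian C A"
    unfolding C_abelian_iff_word_average by (intro allI word_average_if_stein_gap_terms_eq_0) blast
qed

section \<open>The Stein inequality\<close>

definition stein_op :: "('x::complex_inner \<Rightarrow> 'y::complex_inner) \<Rightarrow> ('d::finite \<Rightarrow> 'x \<Rightarrow> 'x) \<Rightarrow> 'x \<Rightarrow> 'x"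
  where "stein_op C A x = gram_a C A x - (\<Sum>i\<in>UNIV. adj (A i) (gram_a C A (A i x)))"

lemma has_sum_finite_sum:
  fixes f :: "'i \<Rightarrow> 'a \<Rightarrow> 'b::topological_comm_monoid_add"
  assumes "finite I" "\<And>i. i \<in> I \<Longrightarrow> (f i has_sum s i) A"
  shows "((\<lambda>x. \<Sum>i\<in>I. f i x) has_sum (\<Sum>i\<in>I. s i)) A"
  using assms by (induction I rule: finite_induct) (auto intro: has_sum_add)

context a_output_stable_pair
begin

lemma has_sum_stein_gap_term: "(stein_gap_term C A x has_sum stein_gap C A x) UNIV"
proof -
  define s where "s i m = (if 0 < m i
    then arv_weight (m(i := m i - 1)) * (norm (obs_coeff C A (A i x) (m(i := m i - 1))))\<^sup>2 else 0)"
    for i m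
  have "(s i has_sum arv_norm2 (obs_coeff C A (A i x))) UNIV" for i
    unfolding s_def
    using has_sum_decrement_reindex[where g = "\<lambda>n. arv_weight n * (norm (obs_coeff C A (A i x) n))\<^sup>2"]
      has_sum_obs_norm2 by simp
  then have "((\<lambda>m. \<Sum>i\<in>UNIV. s i m) has_sum (\<Sum>i\<in>UNIV. arv_norm2 (obs_coeff C A (A i x)))) UNIV"
    by (intro has_sum_finite_sum) auto
  moreover have "((\<lambda>m. if m = (\<lambda>_. 0) then (norm (C x))\<^sup>2 else 0) has_sum (norm (C x))\<^sup>2) UNIV"
    by (rule has_sum_finite_neutralI[where B = "{\<lambda>_. 0}"]) auto
  ultimately have "((\<lambda>m. (\<Sum>i\<in>UNIV. s i m) + - (arv_weight m * (norm (obs_coeff C A x m))\<^sup>2)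
      + (if m = (\<lambda>_. 0) then (norm (C x))\<^sup>2 else 0))
      has_sum ((\<Sum>i\<in>UNIV. arv_norm2 (obs_coeff C A (A i x))) + - arv_norm2 (obs_coeff C A x)
        + (norm (C x))\<^sup>2)) UNIV"
    by (intro has_sum_add has_sum_uminusI has_sum_obs_norm2)
  then show ?thesis
    unfolding stein_gap_term_def stein_gap_def s_def by (simp add: sum.If_cases algebra_simps)
qed

lemma stein_gap_nonneg: "0 \<le> stein_gap C A x"
  using has_sum_stein_gap_term stein_gap_term_nonneg by (rule has_sum_nonneg)

lemma cinner_stein_op: "cinner (adj C (C x) - stein_op C A x) x = of_real (stein_gap C A x)"
  by (simp add: stein_op_def stein_gap_def cinner_diff_left cinner_sum_left cinner_adj_left
      bounded_C bounded_A cinner_gram_a_self cinner_self)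

lemma stein_inequality: "op_le (stein_op C A) (\<lambda>x. adj C (C x))"
  unfolding op_le_def cinner_stein_op using stein_gap_nonneg by (simp add: less_eq_complex_def)

lemma stein_op_add: "stein_op C A (x + y) = stein_op C A x + stein_op C A y"
  by (simp add: stein_op_def bounded_clinear_add[OF bounded_A] adj_add[OF bounded_A] gram_a_add
      sum.distrib algebra_simps)

lemma stein_op_scaleC: "stein_op C A (scaleC c x) = scaleC c (stein_op C A x)"
  by (simp add: stein_op_def bounded_clinear_scaleC[OF bounded_A] adj_scaleC[OF bounded_A]
      gram_a_scaleC scaleC_diff_right scaleC_sum_right)

lemma stein_equality_iff_stein_gap_terms_eq_0:
  "stein_op C A = (\<lambda>x. adj C (C x)) \<longleftrightarrow> (\<forall>x m. stein_gap_term C A x m = 0)"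
proof
  assume "stein_op C A = (\<lambda>x. adj C (C x))"
  then have "stein_gap C A x = 0" for x
    using cinner_stein_op[of x] by simp
  then show "\<forall>x m. stein_gap_term C A x m = 0"
    using nonneg_has_sum_le_0D[OF has_sum_stein_gap_term _ stein_gap_term_nonneg] by simp
next
  assume "\<forall>x m. stein_gap_term C A x m = 0"
  then have "stein_gap C A x = 0" for x
    using has_sum_unique[OF has_sum_stein_gap_term[of x] has_sum_0[of UNIV "stein_gap_term C A x"]]
    by simp
  then have "adj C (C x) - stein_op C A x = 0" for x
    by (rule_tac clinear_eq_0_if_quadratic_form_eq_0[where E = "\<lambda>x. adj C (C x) - stein_op C A x"])
      (simp_all add: stein_op_add stein_op_scaleC bounded_clinear_add[OF bounded_C]
        bounded_clinear_scaleC[OF bounded_C] adj_add[OF bounded_C] adj_scaleC[OF bounded_C]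
        scaleC_diff_right cinner_stein_op)
  then show "stein_op C A = (\<lambda>x. adj C (C x))" by (simp add: fun_eq_iff)
qed

lemma stein_equality_iff_C_abelian: "stein_op C A = (\<lambda>x. adj C (C x)) \<longleftrightarrow> C_abelian C A"
  unfolding stein_equality_iff_stein_gap_terms_eq_0 C_abelian_iff_stein_gap_terms_eq_0 ..

end

section \<open>The noncommutative observability gramian\<close>

definition nc_gram_term ::
  "('x::complex_inner \<Rightarrow> 'y::complex_inner) \<Rightarrow> ('d \<Rightarrow> 'x \<Rightarrow> 'x) \<Rightarrow> 'd list \<Rightarrow> 'x \<Rightarrow> 'x"
  where "nc_gram_term C A v x = adj (wordop A v) (adj C (C (wordop A v x)))"

context a_output_stable_pair
begin

lemma C_abelian_iff_word_energy:
  "C_abelian C A \<longleftrightarrow>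
    (\<forall>x. ((\<lambda>v. (norm (C (wordop A v x)))\<^sup>2) has_sum arv_norm2 (obs_coeff C A x)) UNIV)"
proof -
  define D where "D x m = (\<Sum>v\<in>words_of m. (norm (C (wordop A v x)
      - scaleR (arv_weight m) (obs_coeff C A x m)))\<^sup>2)" for x m
  have D_nonneg: "0 \<le> D x m" for x m unfolding D_def by (intro sum_nonneg) simp
  have energy_iff: "((\<lambda>v. (norm (C (wordop A v x)))\<^sup>2) has_sum arv_norm2 (obs_coeff C A x)) UNIV
      \<longleftrightarrow> (D x has_sum 0) UNIV" for x
  proof -
    let ?W = "\<lambda>m. arv_weight m * (norm (obs_coeff C A x m))\<^sup>2"
    have "(\<Sum>v\<in>words_of m. (norm (C (wordop A v x)))\<^sup>2) = ?W m + D x m" for m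
      unfolding D_def obs_coeff_def by (rule sum_words_of_norm_sq)
    then have "((\<lambda>v. (norm (C (wordop A v x)))\<^sup>2) has_sum arv_norm2 (obs_coeff C A x)) UNIV
        \<longleftrightarrow> ((\<lambda>m. ?W m + D x m) has_sum arv_norm2 (obs_coeff C A x)) UNIV"
      by (simp add: has_sum_words_iff)
    also have "\<dots> \<longleftrightarrow> (D x has_sum 0) UNIV"
    proof
      assume "((\<lambda>m. ?W m + D x m) has_sum arv_norm2 (obs_coeff C A x)) UNIV"
      from has_sum_add[OF this has_sum_uminusI[OF has_sum_obs_norm2[of x]]]
      show "(D x has_sum 0) UNIV" by simp
    next
      assume "(D x has_sum 0) UNIV"
      from has_sum_add[OF has_sum_obs_norm2[of x] this]
      show "((\<lambda>m. ?W m + D x m) has_sum arv_norm2 (obs_coeff C A x)) UNIV" by simp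
    qed
    finally show ?thesis .
  qed
  have "(D x has_sum 0) UNIV \<longleftrightarrow> (\<forall>m. D x m = 0)" for x
    using nonneg_has_sum_le_0D[of "D x" UNIV 0] D_nonneg has_sum_0[of UNIV "D x"] by auto
  also have "(\<forall>m. D x m = 0) \<longleftrightarrow>
      (\<forall>v. C (wordop A v x) = scaleR (arv_weight (abel v)) (obs_coeff C A x (abel v)))" for x
  proof -
    have "D x m = 0 \<longleftrightarrow> (\<forall>v\<in>words_of m. C (wordop A v x) = scaleR (arv_weight m) (obs_coeff C A x m))"
      for m unfolding D_def by (simp add: sum_nonneg_eq_0_iff finite_words_of)
    then show ?thesis by (auto simp: words_of_def)
  qed
  finally show ?thesis
    unfolding energy_iff C_abelian_iff_word_average by blast
qed

lemma cinner_nc_gram_term: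
  "cinner (nc_gram_term C A v y) z = cinner (C (wordop A v y)) (C (wordop A v z))"
  by (simp add: nc_gram_term_def cinner_adj_left bounded_wordop bounded_C)

lemma nc_gram_term_add: "nc_gram_term C A v (y + z) = nc_gram_term C A v y + nc_gram_term C A v z"
  by (simp add: nc_gram_term_def bounded_clinear_add[OF bounded_wordop]
      bounded_clinear_add[OF bounded_C] adj_add[OF bounded_C] adj_add[OF bounded_wordop])

lemma nc_gram_term_scaleC: "nc_gram_term C A v (scaleC c z) = scaleC c (nc_gram_term C A v z)"
  by (simp add: nc_gram_term_def bounded_clinear_scaleC[OF bounded_wordop]
      bounded_clinear_scaleC[OF bounded_C] adj_scaleC[OF bounded_C] adj_scaleC[OF bounded_wordop])

lemma norm_gram_a_minus_nc_gram_terms: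
  assumes "finite F"
    and energy: "\<And>z. ((\<lambda>v. (norm (C (wordop A v z)))\<^sup>2) has_sum arv_norm2 (obs_coeff C A z)) UNIV"
    and "0 < M" and M: "\<And>z. arv_norm2 (obs_coeff C A z) \<le> M * (norm z)\<^sup>2"
  shows "(norm (gram_a C A x - (\<Sum>v\<in>F. nc_gram_term C A v x)))\<^sup>2
    \<le> M * (arv_norm2 (obs_coeff C A x) - (\<Sum>v\<in>F. (norm (C (wordop A v x)))\<^sup>2))"
proof (rule norm_sq_le_if_positive_bounded
    [where q = "\<lambda>z. arv_norm2 (obs_coeff C A z) - (\<Sum>v\<in>F. (norm (C (wordop A v z)))\<^sup>2)"])
  let ?R = "\<lambda>z. gram_a C A z - (\<Sum>v\<in>F. nc_gram_term C A v z)"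
  show "?R (y + z) = ?R y + ?R z" for y z
    by (simp add: gram_a_add nc_gram_term_add sum.distrib)
  show "?R (scaleC c z) = scaleC c (?R z)" for c z
    by (simp add: gram_a_scaleC nc_gram_term_scaleC scaleC_diff_right scaleC_sum_right)
  show "cinner (?R y) z = cnj (cinner (?R z) y)" for y z
    by (simp add: cinner_diff_left cinner_sum_left cinner_gram_a cinner_nc_gram_term
        arv_inner_commute[of "obs_coeff C A z"] cinner_commute[of "C (wordop A _ z)"])
  show "cinner (?R z) z
      = of_real (arv_norm2 (obs_coeff C A z) - (\<Sum>v\<in>F. (norm (C (wordop A v z)))\<^sup>2))" for z
    by (simp add: cinner_diff_left cinner_sum_left cinner_gram_a_self cinner_nc_gram_term cinner_self)
  show "0 \<le> arv_norm2 (obs_coeff C A z) - (\<Sum>v\<in>F. (norm (C (wordop A v z)))\<^sup>2)" for z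
    using finite_sum_le_has_sum[OF energy \<open>finite F\<close>] by simp
  show "arv_norm2 (obs_coeff C A z) - (\<Sum>v\<in>F. (norm (C (wordop A v z)))\<^sup>2) \<le> M * (norm z)\<^sup>2"
    for z
    using M[of z] sum_nonneg[of F "\<lambda>v. (norm (C (wordop A v z)))\<^sup>2"] by simp
qed (rule \<open>0 < M\<close>)

lemma nc_gram_iff_word_energy:
  "is_nc_gram C A (gram_a C A) \<longleftrightarrow>
    (\<forall>x. ((\<lambda>v. (norm (C (wordop A v x)))\<^sup>2) has_sum arv_norm2 (obs_coeff C A x)) UNIV)"
  unfolding is_nc_gram_def nc_gram_term_def[symmetric]
proof (intro iffI allI)
  fix x
  assume "\<forall>x. ((\<lambda>v. nc_gram_term C A v x) has_sum gram_a C A x) UNIV"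
  then have "((\<lambda>v. cinner (nc_gram_term C A v x) x) has_sum cinner (gram_a C A x) x) UNIV"
    by (intro has_sum_bounded_linear[OF bounded_linear_cinner_left]) blast
  then have "((\<lambda>v. complex_of_real ((norm (C (wordop A v x)))\<^sup>2))
      has_sum complex_of_real (arv_norm2 (obs_coeff C A x))) UNIV"
    by (simp add: cinner_nc_gram_term cinner_self cinner_gram_a_self)
  then show "((\<lambda>v. (norm (C (wordop A v x)))\<^sup>2) has_sum arv_norm2 (obs_coeff C A x)) UNIV"
    by (simp only: has_sum_of_real_iff)
next
  fix x
  assume energy: "\<forall>x. ((\<lambda>v. (norm (C (wordop A v x)))\<^sup>2) has_sum arv_norm2 (obs_coeff C A x)) UNIV"
  obtain M where "M > 0" and M: "\<And>z. arv_norm2 (obs_coeff C A z) \<le> M * (norm z)\<^sup>2"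
    using obs_norm2_bound by blast
  let ?q = "\<lambda>F. arv_norm2 (obs_coeff C A x) - (\<Sum>v\<in>F. (norm (C (wordop A v x)))\<^sup>2)"
  have "(?q \<longlongrightarrow> 0) (finite_subsets_at_top UNIV)"
    using tendsto_diff[OF tendsto_const[of "arv_norm2 (obs_coeff C A x)"]
        energy[rule_format, of x, unfolded has_sum_def]] by simp
  then have "((\<lambda>F. sqrt (M * ?q F)) \<longlongrightarrow> 0) (finite_subsets_at_top UNIV)"
    using tendsto_real_sqrt[OF tendsto_mult_right_zero] by fastforce
  moreover have "\<forall>\<^sub>F F in finite_subsets_at_top UNIV.
      norm ((\<Sum>v\<in>F. nc_gram_term C A v x) - gram_a C A x) \<le> sqrt (M * ?q F)"
    using norm_gram_a_minus_nc_gram_terms[OF _ energy[rule_format] \<open>M > 0\<close> M]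
    by (intro eventually_finite_subsets_at_top_weakI) (simp add: norm_minus_commute real_le_rsqrt)
  ultimately have "((\<lambda>F. (\<Sum>v\<in>F. nc_gram_term C A v x) - gram_a C A x) \<longlongrightarrow> 0)
      (finite_subsets_at_top UNIV)"
    by (rule_tac Lim_null_comparison) auto
  then show "((\<lambda>v. nc_gram_term C A v x) has_sum gram_a C A x) UNIV"
    unfolding has_sum_def LIM_zero_iff .
qed

lemma C_abelian_iff_nc_gram: "C_abelian C A \<longleftrightarrow> is_nc_gram C A (gram_a C A)"
  unfolding C_abelian_iff_word_energy nc_gram_iff_word_energy ..

end

theorem proposition3p3:
  fixes C :: "'x::chilbert_space \<Rightarrow> 'y::chilbert_space"
    and A :: "'d::finite \<Rightarrow> 'x \<Rightarrow> 'x"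
  assumes "bounded_clinear C"
    and "\<And>i. bounded_clinear (A i)"
    and "a_output_stable C A"
  shows "op_le (\<lambda>x. gram_a C A x - (\<Sum>i\<in>UNIV. adj (A i) (gram_a C A (A i x))))
                (\<lambda>x. adj C (C x))
         \<and> ((\<lambda>x. gram_a C A x - (\<Sum>i\<in>UNIV. adj (A i) (gram_a C A (A i x)))) = (\<lambda>x. adj C (C x))
              \<longleftrightarrow> C_abelian C A)
         \<and> (C_abelian C A \<longleftrightarrow> is_nc_gram C A (gram_a C A))"
proof -
  interpret a_output_stable_pair C A
    using assms by unfold_locales
  have "(\<lambda>x. gram_a C A x - (\<Sum>i\<in>UNIV. adj (A i) (gram_a C A (A i x)))) = stein_op C A"
    by (simp add: fun_eq_iff stein_op_def)
  then show ?thesis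
    using stein_inequality stein_equality_iff_C_abelian C_abelian_iff_nc_gram by simp
qed

end
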